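(* Let $r>0$, $T>0$, $d\in\mathbb{N}$, $H\in(\tfrac12,1)$, fix $\nu\in(\tfrac12,H)$ and $\alpha\in(1-\nu,\tfrac12)$. Let $F,G:\mathcal{C}_r\to\mathbb{R}^d$ satisfy: (i) there exist constants $L_1,L_2>0$ such that for all $\xi,\eta\in\mathcal{C}_r$, $\|F(\xi)-F(\eta)\|\le L_1\|\xi-\eta\|_\infty$ and $\|F(\xi)\|\le L_2(1+\|\xi\|_\infty)$; (ii) $G$ is $C^1$ (Fréchet) and there exist constants $L_3,L_4>0$ such that for all $\xi,\eta\in\mathcal{C}_r$, $\|D^1G(\xi)\|\le L_3$ and $\|D^1G(\xi)-D^1G(\eta)\|\le L_4\|\xi-\eta\|_\infty$. For $\omega\in C^{\nu}([0,T],\mathbb{R})$ and $x\in C^{0,1-\alpha}([-r,T],\mathbb{R}^d)$ define, for $t\in[0,T]$, $$I(x)(t)=\int_0^t F(x_s)\,ds,\qquad J(x)(t)=\int_0^t G(x_s)\,d\omega(s).$$ Then $I(x)\in C^{0,1-\alpha}([0,T],\mathbb{R}^d)$ and $J(x)\in C^{0,1-\alpha}([0,T],\mathbb{R}^d)$.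
   Context: $\|\cdot\|$ denotes the Euclidean norm on $\mathbb{R}^d$ (and the operator norm for linear maps). $\mathcal{C}_r=C([-r,0],\mathbb{R}^d)$ with the sup norm $\|\eta\|_\infty=\max_{s\in[-r,0]}\|\eta(s)\|$; $D^1G(\xi)$ is the Fréchet derivative of $G$ at $\xi$, a bounded linear map $\mathcal{C}_r\to\mathbb{R}^d$. For a function $x$ on $[-r,T]$ and $s\in[0,T]$, $x_s\in\mathcal{C}_r$ is the segment $x_s(\theta)=x(s+\theta)$, $\theta\in[-r,0]$. For an interval $[a,b]$ and $\beta\in(0,1]$, $C^{\beta}([a,b],\mathbb{R}^d)$ is the space of $f:[a,b]\to\mathbb{R}^d$ with $\|f\|_\beta:=\sup_{t}\|f(t)\|+\sup_{a\le s<t\le b}\frac{\|f(t)-f(s)\|}{|t-s|^\beta}<\infty$. For $\delta>0$ put $\|f\|_{\beta,\delta,a,b}:=\sup_{a\le s<t\le b,\ |t-s|<\delta}\frac{\|f(t)-f(s)\|}{|t-s|^\beta}$, and $C^{0,\beta}([a,b],\mathbb{R}^d):=\{f\in C^\beta([a,b],\mathbb{R}^d):\lim_{\delta\to0}\|f\|_{\beta,\delta,a,b}=0\}$ (a separable closed subspace of $C^\beta$). The integral $\int_a^b f\,d\omega$ is the generalized Riemann–Stieltjes (Young) integral defined via fractional calculus: $\int_a^b f\,d\omega=(-1)^{\alpha}\int_a^b D^{\alpha}_{a+}f(s)\,D^{1-\alpha}_{b-}\omega_{b-}(s)\,ds$, where $\omega_{b-}(s)=\omega(s)-\omega(b)$,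 $D^{\alpha}_{a+}f(s)=\frac{1}{\Gamma(1-\alpha)}\big(\frac{f(s)}{(s-a)^\alpha}+\alpha\int_a^s\frac{f(s)-f(u)}{(s-u)^{1+\alpha}}du\big)$ and $D^{1-\alpha}_{b-}g(s)=\frac{(-1)^{1-\alpha}}{\Gamma(\alpha)}\big(\frac{g(s)}{(b-s)^{1-\alpha}}+(1-\alpha)\int_s^b\frac{g(s)-g(u)}{(u-s)^{2-\alpha}}du\big)$; for Hölder integrands and integrators whose exponents sum to more than $1$ it coincides with the limit of Riemann–Stieltjes sums. *)

theory Defs
  imports "HOL-Analysis.Analysis"
begin

text \<open>Hoelder spaces on an interval [a,b]; functions are total, only values on [a,b] matter.\<close>

definition hoelder_quots :: "real \<Rightarrow> real \<Rightarrow> real \<Rightarrow> real \<Rightarrow> (real \<Rightarrow> 'a::real_normed_vector) \<Rightarrow> real set" where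
  "hoelder_quots \<beta> \<delta> a b f =
     {norm (f t - f s) / \<bar>t - s\<bar> powr \<beta> | s t. a \<le> s \<and> s < t \<and> t \<le> b \<and> \<bar>t - s\<bar> < \<delta>}"

definition hoelder :: "real \<Rightarrow> real \<Rightarrow> real \<Rightarrow> (real \<Rightarrow> 'a::real_normed_vector) \<Rightarrow> bool" where
  "hoelder \<beta> a b f \<longleftrightarrow>
     bounded (f ` {a..b}) \<and>
     bdd_above {norm (f t - f s) / \<bar>t - s\<bar> powr \<beta> | s t. a \<le> s \<and> s < t \<and> t \<le> b}"

definition hoelder_semi_delta :: "real \<Rightarrow> real \<Rightarrow> real \<Rightarrow> real \<Rightarrow> (real \<Rightarrow> 'a::real_normed_vector) \<Rightarrow> real" where
  "hoelder_semi_delta \<beta> \<delta> a b f = Sup (hoelder_quots \<beta> \<delta> a b f)"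

definition hoelder0 :: "real \<Rightarrow> real \<Rightarrow> real \<Rightarrow> (real \<Rightarrow> 'a::real_normed_vector) \<Rightarrow> bool" where
  "hoelder0 \<beta> a b f \<longleftrightarrow>
     hoelder \<beta> a b f \<and> ((\<lambda>\<delta>. hoelder_semi_delta \<beta> \<delta> a b f) \<longlongrightarrow> 0) (at_right 0)"

text \<open>The space C_r = C([-r,0], R^d), elements represented by total functions
  (only the values on [-r,0] matter), with the sup norm over [-r,0].\<close>
definition Cr :: "real \<Rightarrow> (real \<Rightarrow> 'a::real_normed_vector) set" where
  "Cr r = {\<xi>. continuous_on {-r..0} \<xi>}"

definition supn :: "real \<Rightarrow> (real \<Rightarrow> 'a::real_normed_vector) \<Rightarrow> real" where
  "supn r \<xi> = Sup ((\<lambda>s. norm (\<xi> s)) ` {-r..0})"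

definition segment :: "(real \<Rightarrow> 'a) \<Rightarrow> real \<Rightarrow> real \<Rightarrow> 'a" where
  "segment x s = (\<lambda>\<theta>. x (s + \<theta>))"

text \<open>G : C_r -> R^d is C^1 in the Frechet sense with derivative DG (DG xi is a bounded
  linear map C_r -> R^d, depending continuously in operator norm on xi).\<close>
definition frechet_C1_on_Cr ::
  "real \<Rightarrow> ((real \<Rightarrow> 'a::real_normed_vector) \<Rightarrow> 'b::real_normed_vector)
     \<Rightarrow> ((real \<Rightarrow> 'a) \<Rightarrow> (real \<Rightarrow> 'a) \<Rightarrow> 'b) \<Rightarrow> bool" where
  "frechet_C1_on_Cr r G DG \<longleftrightarrow>
     (\<forall>\<xi>\<in>Cr r.
        (\<forall>h\<in>Cr r. \<forall>k\<in>Cr r. DG \<xi> (\<lambda>\<theta>. h \<theta> + k \<theta>) = DG \<xi> h + DG \<xi> k) \<and>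
        (\<forall>c. \<forall>h\<in>Cr r. DG \<xi> (\<lambda>\<theta>. c *\<^sub>R h \<theta>) = c *\<^sub>R DG \<xi> h) \<and>
        (\<exists>M. \<forall>h\<in>Cr r. norm (DG \<xi> h) \<le> M * supn r h) \<and>
        (\<forall>\<epsilon>>0. \<exists>\<delta>>0. \<forall>\<eta>\<in>Cr r. supn r (\<lambda>\<theta>. \<eta> \<theta> - \<xi> \<theta>) < \<delta> \<longrightarrow>
            norm (G \<eta> - G \<xi> - DG \<xi> (\<lambda>\<theta>. \<eta> \<theta> - \<xi> \<theta>)) \<le> \<epsilon> * supn r (\<lambda>\<theta>. \<eta> \<theta> - \<xi> \<theta>)) \<and>
        (\<forall>\<epsilon>>0. \<exists>\<delta>>0. \<forall>\<eta>\<in>Cr r. supn r (\<lambda>\<theta>. \<eta> \<theta> - \<xi> \<theta>) < \<delta> \<longrightarrow>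
            (\<forall>h\<in>Cr r. norm (DG \<eta> h - DG \<xi> h) \<le> \<epsilon> * supn r h)))"

text \<open>Generalized Riemann-Stieltjes (Young) integral via fractional calculus, with parameter alpha.\<close>
definition frac_left :: "real \<Rightarrow> (real \<Rightarrow> 'a::real_normed_vector) \<Rightarrow> real \<Rightarrow> real \<Rightarrow> 'a" where
  "frac_left \<alpha> f a s = (1 / Gamma (1 - \<alpha>)) *\<^sub>R
     ((1 / (s - a) powr \<alpha>) *\<^sub>R f s +
      \<alpha> *\<^sub>R integral {a..s} (\<lambda>u. (1 / (s - u) powr (1 + \<alpha>)) *\<^sub>R (f s - f u)))"

text \<open>D^{1-alpha}_{b-} omega_{b-}(s) without the factor (-1)^{1-alpha}.\<close>
definition frac_right_nosign :: "real \<Rightarrow> (real \<Rightarrow> real) \<Rightarrow> real \<Rightarrow> real \<Rightarrow> real" where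
  "frac_right_nosign \<alpha> \<omega> b s = (1 / Gamma \<alpha>) *
     ((\<omega> s - \<omega> b) / (b - s) powr (1 - \<alpha>) +
      (1 - \<alpha>) * integral {s..b} (\<lambda>u. ((\<omega> s - \<omega> b) - (\<omega> u - \<omega> b)) / (u - s) powr (2 - \<alpha>)))"

text \<open>The combined sign factor (-1)^alpha (-1)^{1-alpha} equals -1.\<close>
definition young_integral :: "real \<Rightarrow> (real \<Rightarrow> 'a::real_normed_vector) \<Rightarrow> (real \<Rightarrow> real) \<Rightarrow> real \<Rightarrow> real \<Rightarrow> 'a" where
  "young_integral \<alpha> f \<omega> a b =
     - integral {a..b} (\<lambda>s. frac_right_nosign \<alpha> \<omega> b s *\<^sub>R frac_left \<alpha> f a s)"

end

theory Submission
  imports Defs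
begin

text \<open>
  The segment map \<open>s \<mapsto> x\<^sub>s\<close> inherits the \<open>(1-\<alpha>)\<close>-Hoelder bound of \<open>x\<close>, and \<open>F\<close>, \<open>G\<close> are
  Lipschitz on \<open>C\<^sub>r\<close> (for \<open>G\<close> by the mean value inequality along line segments), so
  \<open>F(x\<^sub>s)\<close> and \<open>G(x\<^sub>s)\<close> are \<open>(1-\<alpha>)\<close>-Hoelder in \<open>s\<close>. The Lebesgue integral of the bounded
  function \<open>F(x\<^sub>s)\<close> is Lipschitz in \<open>t\<close>. For the Young integral, with \<open>f = G(x\<^sub>.)\<close>, the
  fractional derivatives satisfy \<open>|D\<^sup>\<alpha>\<^sub>0\<^sub>+ f(u)| \<le> C u\<^sup>-\<^sup>\<alpha>\<close> and
  \<open>|D\<^sup>1\<^sup>-\<^sup>\<alpha>\<^sub>t\<^sub>- \<omega>\<^sub>t\<^sub>-(u)| \<le> C (t-u)\<^sup>\<nu>\<^sup>+\<^sup>\<alpha>\<^sup>-\<^sup>1\<close>, and the change of the latter from \<open>s\<close> to \<open>t\<close>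
  is at most \<open>C (t-s)\<^sup>\<nu> (s-u)\<^sup>\<alpha>\<^sup>-\<^sup>1\<close>; splitting \<open>J(t) - J(s)\<close> at \<open>s\<close> and evaluating a Beta
  integral gives \<open>|J(t) - J(s)| \<le> C (t-s)\<^sup>\<nu>\<close>. Since \<open>\<nu> > 1 - \<alpha>\<close>, both integrals are
  Hoelder of an order strictly above \<open>1 - \<alpha>\<close>, hence in the little Hoelder space.
\<close>

section \<open>Integration\<close>

lemma norm_integral_le_integral_bound:
  fixes g :: "'n::euclidean_space \<Rightarrow> 'b::euclidean_space"
  assumes "\<And>x. x \<in> S \<Longrightarrow> norm (g x) \<le> h x" "h integrable_on S"
  shows "norm (integral S g) \<le> integral S h"
proof (cases "g integrable_on S")
  case True
  then show ?thesis using assms integral_norm_bound_integral by blast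
next
  case False
  then have "integral S g = 0" by (simp add: not_integrable_integral)
  moreover have "0 \<le> integral S h"
    by (rule integral_nonneg[OF assms(2)]) (use assms(1) norm_ge_zero order_trans in blast)
  ultimately show ?thesis by simp
qed

lemma has_integral_powr_diff_from:
  fixes a b p :: real
  assumes "p > -1" "a \<le> b"
  shows "((\<lambda>v. (v - a) powr p) has_integral (b - a) powr (p + 1) / (p + 1)) {a..b}"
proof -
  have "((\<lambda>x. x powr p) has_integral (b - a) powr (p + 1) / (p + 1)) (cbox 0 (b - a))"
    using has_integral_powr_from_0[of p "b - a"] assms by simp
  from has_integral_affinity'[OF this, of 1 "-a"] show ?thesis by simp
qed

lemma has_integral_powr_diff_to:
  fixes a b p :: real
  assumes "p > -1" "a \<le> b"
  shows "((\<lambda>v. (b - v) powr p) has_integral (b - a) powr (p + 1) / (p + 1)) {a..b}"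
proof -
  have "((\<lambda>v. (v - (-b)) powr p) has_integral ((-a) - (-b)) powr (p + 1) / (p + 1)) {-b..-a}"
    using has_integral_powr_diff_from[of p "-b" "-a"] assms by simp
  then have "((\<lambda>x. (-x - (-b)) powr p) has_integral ((-a) - (-b)) powr (p + 1) / (p + 1)) {-(-a)..-(-b)}"
    by (subst has_integral_reflect_real)
  then show ?thesis by simp
qed

lemma has_integral_powr_diff_away:
  fixes u s t p :: real
  assumes "u < s" "s \<le> t" "p \<noteq> -1"
  shows "((\<lambda>v. (v - u) powr p) has_integral ((t - u) powr (p + 1) - (s - u) powr (p + 1)) / (p + 1)) {s..t}"
proof -
  have "((\<lambda>v. (v - u) powr p) has_integral
      (\<lambda>v. (v - u) powr (p + 1) / (p + 1)) t - (\<lambda>v. (v - u) powr (p + 1) / (p + 1)) s) {s..t}"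
  proof (rule fundamental_theorem_of_calculus)
    fix v assume v: "v \<in> {s..t}"
    have "((\<lambda>v. (v - u) powr (p + 1) / (p + 1)) has_real_derivative
        (p + 1) * (v - u) powr (p + 1 - 1) * 1 / (p + 1)) (at v within {s..t})"
      using v assms by (auto intro!: derivative_eq_intros)
    then show "((\<lambda>v. (v - u) powr (p + 1) / (p + 1)) has_vector_derivative (v - u) powr p) (at v within {s..t})"
      using assms by (simp add: has_real_derivative_iff_has_vector_derivative)
  qed (use assms in simp)
  then show ?thesis by (simp add: diff_divide_distrib)
qed

lemma has_integral_Beta_on_interval:
  fixes p q s :: real
  assumes "p > 0" "q > 0" "s > 0"
  shows "((\<lambda>u. u powr (p - 1) * (s - u) powr (q - 1)) has_integral s powr (p + q - 1) * Beta p q) {0..s}"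
proof -
  have "((\<lambda>x. x powr (p - 1) * (1 - x) powr (q - 1)) has_integral Beta p q) (cbox 0 1)"
    using has_integral_Beta_real assms by simp
  then have "((\<lambda>x. x powr (p - 1) * (1 - x) powr (q - 1)) \<circ> (\<lambda>x. (1/s) *\<^sub>R x + 0)
      has_integral (Beta p q /\<^sub>R (1/s) ^ DIM(real))) (cbox ((0 - 0) /\<^sub>R (1/s)) ((1 - 0) /\<^sub>R (1/s)))"
    unfolding o_def by (rule has_integral_affinity') (use assms in simp)
  then have "((\<lambda>x. (x / s) powr (p - 1) * (1 - x / s) powr (q - 1)) has_integral s * Beta p q) {0..s}"
    by (simp add: o_def field_simps)
  then have scaled: "((\<lambda>x. s powr (p + q - 2) * ((x / s) powr (p - 1) * (1 - x / s) powr (q - 1)))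
      has_integral s powr (p + q - 2) * (s * Beta p q)) {0..s}"
    by (rule has_integral_mult_right)
  have "s powr (p + q - 2) * ((x / s) powr (p - 1) * (1 - x / s) powr (q - 1))
      = x powr (p - 1) * (s - x) powr (q - 1)" if "x \<in> {0..s}" for x
  proof -
    have "1 - x / s = (s - x) / s" using assms by (simp add: field_simps)
    then have "(x / s) powr (p - 1) * (1 - x / s) powr (q - 1)
        = x powr (p - 1) * (s - x) powr (q - 1) / (s powr (p - 1) * s powr (q - 1))"
      using that assms by (simp add: powr_divide)
    moreover have "s powr (p - 1) * s powr (q - 1) = s powr (p + q - 2)"
      by (simp add: powr_add[symmetric])
    ultimately show ?thesis using assms by simp
  qed
  then have "((\<lambda>x. x powr (p - 1) * (s - x) powr (q - 1)) has_integral s powr (p + q - 2) * (s * Beta p q)) {0..s}"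
    by (rule has_integral_eq[OF _ scaled])
  moreover have "s powr (p + q - 2) * (s * Beta p q) = s powr (p + q - 1) * Beta p q"
    using assms powr_add[of s "p + q - 2" 1] by (simp add: mult.assoc)
  ultimately show ?thesis by simp
qed

lemma integral_eq_lborel_indicator:
  fixes k :: "real \<Rightarrow> 'b::euclidean_space"
  assumes "k \<in> borel_measurable borel" "k absolutely_integrable_on {a..b}"
  shows "integral {a..b} k = (LINT v|lborel. indicator {a..b} v *\<^sub>R k v)"
proof -
  have "(LINT x:{a..b}|lebesgue. k x) = integral {a..b} k"
    using set_lebesgue_integral_eq_integral(2) assms(2) by (simp add: absolutely_integrable_on_def)
  moreover have "(\<lambda>v. indicator {a..b} v *\<^sub>R k v) \<in> borel_measurable lborel"
    using assms(1) by measurable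
  ultimately show ?thesis unfolding set_lebesgue_integral_def
    by (simp add: integral_completion)
qed

lemma absolutely_integrable_if_borel_dominated:
  fixes g :: "real \<Rightarrow> 'b::euclidean_space"
  assumes "g \<in> borel_measurable borel" "S \<in> sets lebesgue"
    and "\<And>x. x \<in> S \<Longrightarrow> norm (g x) \<le> h x" "h integrable_on S"
  shows "g absolutely_integrable_on S"
proof (rule measurable_bounded_by_integrable_imp_absolutely_integrable[OF _ assms(2) assms(4)])
  show "g \<in> borel_measurable (lebesgue_on S)"
    using assms(1) by (simp add: measurable_completion measurable_restrict_space1)
qed (use assms(3) in auto)

lemma integrable_on_Icc_if_borel_dominated_inside:
  fixes g g' :: "real \<Rightarrow> 'b::euclidean_space"
  assumes "g' \<in> borel_measurable borel" "\<And>x. x \<in> {a<..<b} \<Longrightarrow> g x = g' x"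
    and "\<And>x. x \<in> {a<..<b} \<Longrightarrow> norm (g x) \<le> h x" "h integrable_on {a<..<b}"
  shows "g integrable_on {a..b}"
proof -
  have "g' absolutely_integrable_on {a<..<b}"
    by (rule absolutely_integrable_if_borel_dominated[OF assms(1) _ _ assms(4)]) (use assms(2,3) in auto)
  then have "g' integrable_on {a<..<b}"
    using set_lebesgue_integral_eq_integral(1) by (simp add: absolutely_integrable_on_def)
  then have "g integrable_on {a<..<b}" by (rule integrable_eq) (use assms(2) in auto)
  then show ?thesis by (simp add: integrable_on_open_interval_real)
qed

lemma borel_measurable_lborel_parametric_integral:
  fixes k :: "real \<Rightarrow> real \<Rightarrow> 'b::euclidean_space"
  assumes "(\<lambda>(u, v). k u v) \<in> borel_measurable (lborel \<Otimes>\<^sub>M lborel)"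
  shows "(\<lambda>u. LINT v|lborel. k u v) \<in> borel_measurable borel"
  using lborel.borel_measurable_lebesgue_integral[OF assms] by (simp add: measurable_lborel1)

definition clamp :: "real \<Rightarrow> real \<Rightarrow> real \<Rightarrow> real" where
  "clamp a b u = max a (min b u)"

lemma clamp_in: "a \<le> b \<Longrightarrow> clamp a b u \<in> {a..b}"
  unfolding clamp_def by auto

lemma clamp_id: "u \<in> {a..b} \<Longrightarrow> clamp a b u = u"
  unfolding clamp_def by auto

lemma borel_measurable_comp_clamp:
  fixes g :: "real \<Rightarrow> 'b::euclidean_space"
  assumes "a \<le> b" "continuous_on {a..b} g"
  shows "(\<lambda>u. g (clamp a b u)) \<in> borel_measurable borel"
proof (rule borel_measurable_continuous_onI)
  have "continuous_on UNIV (clamp a b)" unfolding clamp_def by (intro continuous_intros)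
  then show "continuous_on UNIV (\<lambda>u. g (clamp a b u))"
    by (rule continuous_on_compose2[OF assms(2)]) (use assms(1) clamp_in in auto)
qed

section \<open>Hoelder functions\<close>

lemma hoelder_bound_imp_continuous_on:
  fixes f :: "real \<Rightarrow> 'b::real_normed_vector"
  assumes \<beta>: "\<beta> > 0" and K: "\<And>s t. s \<in> S \<Longrightarrow> t \<in> S \<Longrightarrow> norm (f t - f s) \<le> K * \<bar>t - s\<bar> powr \<beta>"
  shows "continuous_on S f"
  unfolding continuous_on_iff
proof (intro ballI allI impI)
  fix x e :: real assume x: "x \<in> S" and e: "e > 0"
  define K' where "K' = max K 1"
  have K': "K' > 0" by (simp add: K'_def)
  define d where "d = (e / K') powr (1 / \<beta>)"
  show "\<exists>d>0. \<forall>x'\<in>S. dist x' x < d \<longrightarrow> dist (f x') (f x) < e"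
  proof (intro exI[of _ d] conjI ballI impI)
    show "d > 0" using e K' by (simp add: d_def)
    fix y assume y: "y \<in> S" and dy: "dist y x < d"
    have "dist (f y) (f x) \<le> K' * \<bar>y - x\<bar> powr \<beta>"
      using K[OF x y] by (simp add: dist_norm K'_def) (smt (verit) mult_right_mono powr_ge_zero)
    also have "\<dots> < K' * d powr \<beta>"
      using dy \<beta> K' by (intro mult_strict_left_mono powr_less_mono2) (auto simp: dist_real_def)
    also have "\<dots> = e" using e K' \<beta> by (simp add: d_def powr_powr)
    finally show "dist (f y) (f x) < e" .
  qed
qed

lemma hoelder_obtain_bound:
  fixes f :: "real \<Rightarrow> 'b::real_normed_vector"
  assumes "hoelder \<beta> a b f"
  obtains K where "K \<ge> 0"
    and "\<And>s t. s \<in> {a..b} \<Longrightarrow> t \<in> {a..b} \<Longrightarrow> norm (f t - f s) \<le> K * \<bar>t - s\<bar> powr \<beta>"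
proof -
  from assms obtain K where K: "\<And>s t. a \<le> s \<Longrightarrow> s < t \<Longrightarrow> t \<le> b \<Longrightarrow> norm (f t - f s) / \<bar>t - s\<bar> powr \<beta> \<le> K"
    unfolding hoelder_def bdd_above_def by blast
  have ordered: "norm (f t - f s) \<le> max K 0 * \<bar>t - s\<bar> powr \<beta>" if "a \<le> s" "s < t" "t \<le> b" for s t
  proof -
    have "norm (f t - f s) \<le> K * \<bar>t - s\<bar> powr \<beta>"
      using K[OF that] that by (simp add: divide_le_eq)
    also have "\<dots> \<le> max K 0 * \<bar>t - s\<bar> powr \<beta>" by (intro mult_right_mono) auto
    finally show ?thesis .
  qed
  show ?thesis
  proof (rule that[of "max K 0"])
    fix s t assume "s \<in> {a..b}" "t \<in> {a..b}"
    then consider "s < t" | "s = t" | "t < s" by fastforce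
    then show "norm (f t - f s) \<le> max K 0 * \<bar>t - s\<bar> powr \<beta>"
      by cases (use ordered[of s t] ordered[of t s] \<open>s \<in> {a..b}\<close> \<open>t \<in> {a..b}\<close>
                in \<open>auto simp: norm_minus_commute abs_minus_commute\<close>)
  qed simp
qed

lemma hoelder0_if_higher_order_bound:
  fixes g :: "real \<Rightarrow> 'b::real_normed_vector"
  assumes ab: "a < b" and \<beta>: "0 < \<beta>" "\<beta> < p" and C: "C \<ge> 0"
    and inc: "\<And>s t. a \<le> s \<Longrightarrow> s < t \<Longrightarrow> t \<le> b \<Longrightarrow> norm (g t - g s) \<le> C * (t - s) powr p"
  shows "hoelder0 \<beta> a b g"
proof -
  have quot_le: "norm (g t - g s) / \<bar>t - s\<bar> powr \<beta> \<le> C * \<delta> powr (p - \<beta>)"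
    if "a \<le> s" "s < t" "t \<le> b" "t - s \<le> \<delta>" for s t \<delta>
  proof -
    have "norm (g t - g s) \<le> C * ((t - s) powr (p - \<beta>) * (t - s) powr \<beta>)"
      using inc[OF that(1-3)] by (simp add: powr_add[symmetric])
    also have "\<dots> \<le> C * (\<delta> powr (p - \<beta>) * (t - s) powr \<beta>)"
      using that \<beta> C by (intro mult_left_mono mult_right_mono powr_mono2) auto
    finally show ?thesis using that by (simp add: divide_le_eq mult.assoc)
  qed
  have bounded: "bounded (g ` {a..b})"
  proof -
    have "norm (g t) \<le> norm (g a) + C * (b - a) powr p" if "t \<in> {a..b}" for t
    proof (cases "t = a")
      case False
      then have "norm (g t - g a) \<le> C * (b - a) powr p"
        using inc[of a t] that \<beta> C by (smt (verit) atLeastAtMost_iff mult_left_mono powr_mono2)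
      then show ?thesis by (smt (verit) norm_triangle_sub)
    qed (use C in simp)
    then show ?thesis unfolding bounded_iff by blast
  qed
  have "hoelder \<beta> a b g"
    unfolding hoelder_def bdd_above_def using bounded quot_le[of _ _ "b - a"] by fastforce
  moreover have "((\<lambda>\<delta>. hoelder_semi_delta \<beta> \<delta> a b g) \<longlongrightarrow> 0) (at_right 0)"
  proof (rule tendsto_sandwich[of "\<lambda>_. 0" _ _ "\<lambda>\<delta>. C * \<delta> powr (p - \<beta>)"])
    have "0 \<le> hoelder_semi_delta \<beta> \<delta> a b g \<and> hoelder_semi_delta \<beta> \<delta> a b g \<le> C * \<delta> powr (p - \<beta>)"
      if \<delta>: "0 < \<delta>" "\<delta> < b - a" for \<delta>
    proof -
      let ?Q = "hoelder_quots \<beta> \<delta> a b g"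
      have ub: "q \<le> C * \<delta> powr (p - \<beta>)" if "q \<in> ?Q" for q
        using that quot_le unfolding hoelder_quots_def by fastforce
      have mem: "norm (g (a + \<delta>/2) - g a) / \<bar>a + \<delta>/2 - a\<bar> powr \<beta> \<in> ?Q"
        unfolding hoelder_quots_def using \<delta> by (intro CollectI exI[of _ a] exI[of _ "a + \<delta>/2"]) auto
      have "0 \<le> Sup ?Q"
        by (rule order_trans[OF _ cSup_upper[OF mem]]) (use ub in \<open>auto simp: bdd_above_def\<close>)
      moreover have "Sup ?Q \<le> C * \<delta> powr (p - \<beta>)"
        by (rule cSup_least) (use mem ub in auto)
      ultimately show ?thesis unfolding hoelder_semi_delta_def by simp
    qed
    moreover have "eventually (\<lambda>\<delta>. 0 < \<delta> \<and> \<delta> < b - a) (at_right (0::real))"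
      using ab by (simp add: eventually_at_right_field) (metis diff_gt_0_iff_gt)
    ultimately show "eventually (\<lambda>\<delta>. 0 \<le> hoelder_semi_delta \<beta> \<delta> a b g) (at_right 0)"
      and "eventually (\<lambda>\<delta>. hoelder_semi_delta \<beta> \<delta> a b g \<le> C * \<delta> powr (p - \<beta>)) (at_right 0)"
      by (auto elim: eventually_mono)
    show "((\<lambda>_. 0::real) \<longlongrightarrow> 0) (at_right 0)" by simp
    have "((\<lambda>\<delta>. C * \<delta> powr (p - \<beta>)) \<longlongrightarrow> C * 0 powr (p - \<beta>)) (at_right 0)"
      using \<beta> by (intro tendsto_intros) (auto simp: eventually_at_right_field)
    then show "((\<lambda>\<delta>. C * \<delta> powr (p - \<beta>)) \<longlongrightarrow> 0) (at_right 0)" by simp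
  qed
  ultimately show ?thesis unfolding hoelder0_def by blast
qed

lemma hoelder0_integral_of_continuous:
  fixes g :: "real \<Rightarrow> 'b::euclidean_space"
  assumes T: "T > 0" and \<beta>: "0 < \<beta>" "\<beta> < 1" and g: "continuous_on {0..T} g"
  shows "hoelder0 \<beta> 0 T (\<lambda>t. integral {0..t} g)"
proof -
  obtain M where M: "\<And>s. s \<in> {0..T} \<Longrightarrow> norm (g s) \<le> M"
    using compact_imp_bounded[OF compact_continuous_image[OF g compact_Icc]]
    unfolding bounded_iff by blast
  have "norm (integral {0..t} g - integral {0..s} g) \<le> M * (t - s) powr 1"
    if st: "0 \<le> s" "s < t" "t \<le> T" for s t
  proof -
    have "g integrable_on {0..t}"
      using st by (intro integrable_continuous_real continuous_on_subset[OF g]) auto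
    then have "integral {0..s} g + integral {s..t} g = integral {0..t} g"
      by (rule Henstock_Kurzweil_Integration.integral_combine[rotated 2]) (use st in auto)
    then have "norm (integral {0..t} g - integral {0..s} g) = norm (integral {s..t} g)"
      by (metis add_diff_cancel_left')
    also have "\<dots> \<le> integral {s..t} (\<lambda>_. M)"
      by (rule norm_integral_le_integral_bound) (use M st in auto)
    finally show ?thesis using st by (simp add: mult.commute)
  qed
  moreover have "M \<ge> 0" using M[of 0] T by (smt (verit) atLeastAtMost_iff norm_ge_zero)
  ultimately show ?thesis
    by (intro hoelder0_if_higher_order_bound[OF T \<beta>(1)]) (use \<beta> in auto)
qed

section \<open>Lipschitz functionals on \<open>C\<^sub>r\<close> along segments\<close>

lemma norm_le_supn:
  fixes h :: "real \<Rightarrow> 'a::real_normed_vector"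
  assumes "h \<in> Cr r" "\<theta> \<in> {-r..0}"
  shows "norm (h \<theta>) \<le> supn r h"
proof -
  have "compact ((\<lambda>s. norm (h s)) ` {-r..0})"
    using assms(1) unfolding Cr_def by (intro compact_continuous_image continuous_on_norm) auto
  then have "bdd_above ((\<lambda>s. norm (h s)) ` {-r..0})"
    by (meson bounded_imp_bdd_above compact_imp_bounded)
  then show ?thesis unfolding supn_def using assms(2) by (intro cSUP_upper) auto
qed

lemma supn_le:
  fixes h :: "real \<Rightarrow> 'a::real_normed_vector"
  assumes "r \<ge> 0" "\<And>\<theta>. \<theta> \<in> {-r..0} \<Longrightarrow> norm (h \<theta>) \<le> B"
  shows "supn r h \<le> B"
  unfolding supn_def using assms by (intro cSUP_least) auto

lemma supn_nonneg:
  fixes h :: "real \<Rightarrow> 'a::real_normed_vector"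
  assumes "h \<in> Cr r" "r \<ge> 0"
  shows "0 \<le> supn r h"
  using norm_le_supn[OF assms(1), of 0] assms(2) by (smt (verit) atLeastAtMost_iff norm_ge_zero)

lemma Cr_line_diff:
  assumes "\<eta> \<in> Cr r" "h \<in> Cr r"
  shows "(\<lambda>\<theta>. \<eta> \<theta> + \<tau> *\<^sub>R h \<theta>) \<in> Cr r" "(\<lambda>\<theta>. \<eta> \<theta> - h \<theta>) \<in> Cr r"
  using assms unfolding Cr_def by (auto intro!: continuous_intros)

lemma frechet_C1_on_Cr_has_derivative_line:
  fixes G :: "(real \<Rightarrow> 'a::real_normed_vector) \<Rightarrow> 'b::real_normed_vector"
  assumes r: "r \<ge> 0" and C1: "frechet_C1_on_Cr r G DG" and \<eta>: "\<eta> \<in> Cr r" and h: "h \<in> Cr r"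
  defines "z \<equiv> \<lambda>\<tau>. \<lambda>\<theta>. \<eta> \<theta> + \<tau> *\<^sub>R h \<theta>"
  shows "((\<lambda>\<tau>. G (z \<tau>)) has_derivative (\<lambda>d. d *\<^sub>R DG (z \<tau>) h)) (at \<tau> within S)"
  unfolding has_derivative_within_alt
proof (intro conjI allI impI bounded_linear_scaleR_left)
  fix e :: real assume e: "e > 0"
  have zC: "z y \<in> Cr r" for y unfolding z_def by (rule Cr_line_diff[OF \<eta> h])
  define N where "N = supn r h"
  have N: "0 \<le> N" unfolding N_def using supn_nonneg[OF h r] .
  have zdiff: "(\<lambda>\<theta>. z y \<theta> - z \<tau> \<theta>) = (\<lambda>\<theta>. (y - \<tau>) *\<^sub>R h \<theta>)" for y
    unfolding z_def by (auto simp: algebra_simps)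
  have supn_zdiff: "supn r (\<lambda>\<theta>. z y \<theta> - z \<tau> \<theta>) \<le> \<bar>y - \<tau>\<bar> * N" for y
    unfolding zdiff N_def
    by (rule supn_le) (use r norm_le_supn[OF h] in \<open>auto intro: mult_left_mono\<close>)
  have "\<forall>\<epsilon>>0. \<exists>\<delta>>0. \<forall>\<xi>\<in>Cr r. supn r (\<lambda>\<theta>. \<xi> \<theta> - z \<tau> \<theta>) < \<delta> \<longrightarrow>
      norm (G \<xi> - G (z \<tau>) - DG (z \<tau>) (\<lambda>\<theta>. \<xi> \<theta> - z \<tau> \<theta>)) \<le> \<epsilon> * supn r (\<lambda>\<theta>. \<xi> \<theta> - z \<tau> \<theta>)"
    using C1 zC unfolding frechet_C1_on_Cr_def by blast
  moreover have "e / (N + 1) > 0" using e N by simp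
  ultimately obtain \<delta> where \<delta>: "\<delta> > 0" and remainder: "\<And>\<xi>. \<xi> \<in> Cr r \<Longrightarrow> supn r (\<lambda>\<theta>. \<xi> \<theta> - z \<tau> \<theta>) < \<delta> \<Longrightarrow>
      norm (G \<xi> - G (z \<tau>) - DG (z \<tau>) (\<lambda>\<theta>. \<xi> \<theta> - z \<tau> \<theta>)) \<le> e / (N + 1) * supn r (\<lambda>\<theta>. \<xi> \<theta> - z \<tau> \<theta>)"
    by blast
  show "\<exists>d>0. \<forall>y\<in>S. norm (y - \<tau>) < d \<longrightarrow> norm (G (z y) - G (z \<tau>) - (y - \<tau>) *\<^sub>R DG (z \<tau>) h) \<le> e * norm (y - \<tau>)"
  proof (intro exI[of _ "\<delta> / (N + 1)"] conjI ballI impI)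
    show "\<delta> / (N + 1) > 0" using \<delta> N by simp
    fix y :: real assume "norm (y - \<tau>) < \<delta> / (N + 1)"
    then have "\<bar>y - \<tau>\<bar> * (N + 1) < \<delta>" using N by (simp add: field_simps)
    moreover have "\<bar>y - \<tau>\<bar> * N \<le> \<bar>y - \<tau>\<bar> * (N + 1)" by (simp add: mult_left_mono)
    ultimately have "\<bar>y - \<tau>\<bar> * N < \<delta>" by linarith
    then have small: "supn r (\<lambda>\<theta>. z y \<theta> - z \<tau> \<theta>) < \<delta>" using supn_zdiff[of y] by linarith
    have "DG (z \<tau>) (\<lambda>\<theta>. z y \<theta> - z \<tau> \<theta>) = (y - \<tau>) *\<^sub>R DG (z \<tau>) h"
      unfolding zdiff using C1 zC h unfolding frechet_C1_on_Cr_def by blast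
    then have "norm (G (z y) - G (z \<tau>) - (y - \<tau>) *\<^sub>R DG (z \<tau>) h) \<le> e / (N + 1) * supn r (\<lambda>\<theta>. z y \<theta> - z \<tau> \<theta>)"
      using remainder[OF zC small] by simp
    also have "\<dots> \<le> e / (N + 1) * (\<bar>y - \<tau>\<bar> * N)"
      using supn_zdiff e N by (intro mult_left_mono) auto
    also have "\<dots> \<le> e * \<bar>y - \<tau>\<bar>"
      using N e by (simp add: field_simps mult_left_mono)
    finally show "norm (G (z y) - G (z \<tau>) - (y - \<tau>) *\<^sub>R DG (z \<tau>) h) \<le> e * norm (y - \<tau>)" by simp
  qed
qed

lemma frechet_C1_on_Cr_lipschitz:
  fixes G :: "(real \<Rightarrow> 'a::real_normed_vector) \<Rightarrow> 'b::real_normed_vector"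
  assumes r: "r \<ge> 0" and C1: "frechet_C1_on_Cr r G DG"
    and L: "\<And>\<xi> h. \<xi> \<in> Cr r \<Longrightarrow> h \<in> Cr r \<Longrightarrow> norm (DG \<xi> h) \<le> L * supn r h"
    and \<xi>: "\<xi> \<in> Cr r" and \<eta>: "\<eta> \<in> Cr r"
  shows "norm (G \<xi> - G \<eta>) \<le> L * supn r (\<lambda>\<theta>. \<xi> \<theta> - \<eta> \<theta>)"
proof -
  define h where "h = (\<lambda>\<theta>. \<xi> \<theta> - \<eta> \<theta>)"
  have h: "h \<in> Cr r" unfolding h_def by (rule Cr_line_diff[OF \<xi> \<eta>])
  define z where "z = (\<lambda>\<tau>::real. \<lambda>\<theta>. \<eta> \<theta> + \<tau> *\<^sub>R h \<theta>)"
  have "onorm (\<lambda>d. d *\<^sub>R DG (z \<tau>) h) \<le> L * supn r h" for \<tau>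
  proof (rule onorm_le)
    fix d :: real
    have "norm (DG (z \<tau>) h) \<le> L * supn r h"
      unfolding z_def by (rule L[OF Cr_line_diff(1)[OF \<eta> h] h])
    then show "norm (d *\<^sub>R DG (z \<tau>) h) \<le> L * supn r h * norm d"
      by (simp add: mult.commute mult_left_mono)
  qed
  then have "norm (G (z 1) - G (z 0)) \<le> L * supn r h * norm (1 - 0::real)"
    using frechet_C1_on_Cr_has_derivative_line[OF r C1 \<eta> h] unfolding z_def
    by (intro differentiable_bound[of "{0..1}"]) auto
  moreover have "z 1 = \<xi>" "z 0 = \<eta>" unfolding z_def h_def by auto
  ultimately show ?thesis unfolding h_def by simp
qed

lemma segment_in_Cr:
  fixes x :: "real \<Rightarrow> 'a::real_normed_vector"
  assumes "continuous_on {-r..T} x" "s \<in> {0..T}"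
  shows "segment x s \<in> Cr r"
proof -
  have "continuous_on {-r..0} (\<lambda>\<theta>. x (s + \<theta>))"
    by (rule continuous_on_compose2[OF assms(1)]) (use assms(2) in \<open>auto intro!: continuous_intros\<close>)
  then show ?thesis unfolding Cr_def segment_def by simp
qed

lemma supn_segment_diff_le:
  fixes x :: "real \<Rightarrow> 'a::real_normed_vector"
  assumes r: "r \<ge> 0" and s: "s \<in> {0..T}" and t: "t \<in> {0..T}"
    and K: "\<And>s t. s \<in> {-r..T} \<Longrightarrow> t \<in> {-r..T} \<Longrightarrow> norm (x t - x s) \<le> K * \<bar>t - s\<bar> powr \<beta>"
  shows "supn r (\<lambda>\<theta>. segment x t \<theta> - segment x s \<theta>) \<le> K * \<bar>t - s\<bar> powr \<beta>"
proof (rule supn_le[OF r])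
  fix \<theta> assume "\<theta> \<in> {-r..0}"
  then have "norm (x (t + \<theta>) - x (s + \<theta>)) \<le> K * \<bar>(t + \<theta>) - (s + \<theta>)\<bar> powr \<beta>"
    using s t by (intro K) auto
  then show "norm (segment x t \<theta> - segment x s \<theta>) \<le> K * \<bar>t - s\<bar> powr \<beta>"
    unfolding segment_def by simp
qed

lemma hoelder_bound_lipschitz_comp_segment:
  fixes x :: "real \<Rightarrow> 'a::real_normed_vector" and \<Phi> :: "(real \<Rightarrow> 'a) \<Rightarrow> 'b::real_normed_vector"
  assumes r: "r \<ge> 0" and \<beta>: "\<beta> > 0" and L: "L \<ge> 0"
    and K: "\<And>s t. s \<in> {-r..T} \<Longrightarrow> t \<in> {-r..T} \<Longrightarrow> norm (x t - x s) \<le> K * \<bar>t - s\<bar> powr \<beta>"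
    and lip: "\<And>\<xi> \<eta>. \<xi> \<in> Cr r \<Longrightarrow> \<eta> \<in> Cr r \<Longrightarrow> norm (\<Phi> \<xi> - \<Phi> \<eta>) \<le> L * supn r (\<lambda>\<theta>. \<xi> \<theta> - \<eta> \<theta>)"
    and s: "s \<in> {0..T}" and t: "t \<in> {0..T}"
  shows "norm (\<Phi> (segment x t) - \<Phi> (segment x s)) \<le> (L * K) * \<bar>t - s\<bar> powr \<beta>"
proof -
  have "continuous_on {-r..T} x" by (rule hoelder_bound_imp_continuous_on[OF \<beta> K])
  then have "norm (\<Phi> (segment x t) - \<Phi> (segment x s)) \<le> L * supn r (\<lambda>\<theta>. segment x t \<theta> - segment x s \<theta>)"
    using s t by (intro lip segment_in_Cr)
  also have "\<dots> \<le> L * (K * \<bar>t - s\<bar> powr \<beta>)"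
    by (intro mult_left_mono supn_segment_diff_le[OF r s t K] L)
  finally show ?thesis by simp
qed

section \<open>Fractional derivatives and the Young integral\<close>

lemma divide_powr_le_of_le_powr:
  fixes x d K p q :: real
  assumes "d \<ge> 0" "K \<ge> 0" "x \<le> K * d powr p"
  shows "x / d powr q \<le> K * d powr (p - q)"
proof (cases "d = 0")
  case False
  then have "x / d powr q \<le> K * d powr p / d powr q"
    using assms by (intro divide_right_mono) auto
  also have "\<dots> = K * d powr (p - q)" by (simp add: powr_diff)
  finally show ?thesis .
qed simp

locale young_setting =
  fixes f :: "real \<Rightarrow> 'a::euclidean_space" and \<omega> :: "real \<Rightarrow> real" and \<alpha> \<nu> T Kf Mf Kw :: real
  assumes T: "T > 0" and \<alpha>: "0 < \<alpha>" "\<alpha> < 1/2" and \<nu>: "1 - \<alpha> < \<nu>" "\<nu> < 1"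
    and Kf: "Kf \<ge> 0" and Mf: "Mf \<ge> 0" and Kw: "Kw \<ge> 0"
    and hf: "\<And>s t. s \<in> {0..T} \<Longrightarrow> t \<in> {0..T} \<Longrightarrow> norm (f t - f s) \<le> Kf * \<bar>t - s\<bar> powr (1 - \<alpha>)"
    and mf: "\<And>t. t \<in> {0..T} \<Longrightarrow> norm (f t) \<le> Mf"
    and hw: "\<And>s t. s \<in> {0..T} \<Longrightarrow> t \<in> {0..T} \<Longrightarrow> \<bar>\<omega> t - \<omega> s\<bar> \<le> Kw * \<bar>t - s\<bar> powr \<nu>"
begin

definition "c_left = (Mf + \<alpha> * Kf * T powr (1 - \<alpha>) / (1 - 2 * \<alpha>)) / Gamma (1 - \<alpha>)"
definition "c_right = (Kw + (1 - \<alpha>) * Kw / (\<nu> + \<alpha> - 1)) / Gamma \<alpha>"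

lemma c_left_nonneg: "c_left \<ge> 0"
  unfolding c_left_def using \<alpha> Kf Mf T by (intro divide_nonneg_pos add_nonneg_nonneg Gamma_real_pos) auto

lemma c_right_nonneg: "c_right \<ge> 0"
  unfolding c_right_def using \<alpha> Kw \<nu> by (intro divide_nonneg_pos add_nonneg_nonneg Gamma_real_pos) auto

lemma continuous_on_\<omega>: "continuous_on {0..T} \<omega>"
  by (rule hoelder_bound_imp_continuous_on[where \<beta>=\<nu> and K=Kw]) (use \<nu> \<alpha> hw in auto)

lemma continuous_on_f: "continuous_on {0..T} f"
  by (rule hoelder_bound_imp_continuous_on[where \<beta>="1 - \<alpha>" and K=Kf]) (use \<alpha> hf in auto)

lemma norm_left_kernel_le:
  assumes "0 \<le> v" "v \<le> u" "u \<le> T"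
  shows "norm ((1 / (u - v) powr (1 + \<alpha>)) *\<^sub>R (f u - f v)) \<le> Kf * (u - v) powr (- 2 * \<alpha>)"
proof -
  have "norm (f u - f v) / (u - v) powr (1 + \<alpha>) \<le> Kf * (u - v) powr ((1 - \<alpha>) - (1 + \<alpha>))"
    using hf[of v u] assms Kf by (intro divide_powr_le_of_le_powr) auto
  then show ?thesis by simp
qed

lemma abs_right_kernel_le:
  assumes "0 \<le> u" "u \<le> v" "v \<le> T"
  shows "\<bar>\<omega> u - \<omega> v\<bar> / (v - u) powr q \<le> Kw * (v - u) powr (\<nu> - q)"
  using hw[of v u] assms Kw by (intro divide_powr_le_of_le_powr) (auto simp: abs_minus_commute)

lemma norm_frac_left_le:
  assumes u: "0 < u" "u \<le> T"
  shows "norm (frac_left \<alpha> f 0 u) \<le> c_left * u powr (- \<alpha>)"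
proof -
  define I where "I = integral {0..u} (\<lambda>v. (1 / (u - v) powr (1 + \<alpha>)) *\<^sub>R (f u - f v))"
  have hi: "((\<lambda>v. Kf * (u - v) powr (- 2 * \<alpha>)) has_integral Kf * (u powr (- 2 * \<alpha> + 1) / (- 2 * \<alpha> + 1))) {0..u}"
    using has_integral_mult_right[OF has_integral_powr_diff_to[of "- 2 * \<alpha>" 0 u]] \<alpha> u by simp
  have "norm I \<le> integral {0..u} (\<lambda>v. Kf * (u - v) powr (- 2 * \<alpha>))"
    unfolding I_def by (rule norm_integral_le_integral_bound) (use norm_left_kernel_le u hi in \<open>auto simp: has_integral_integrable\<close>)
  also have "\<dots> = Kf * (u powr (1 - \<alpha>) * u powr (- \<alpha>) / (1 - 2 * \<alpha>))"
    using integral_unique[OF hi] u by (simp add: powr_add[symmetric])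
  also have "\<dots> \<le> Kf * (T powr (1 - \<alpha>) * u powr (- \<alpha>) / (1 - 2 * \<alpha>))"
    using u \<alpha> Kf by (intro mult_left_mono divide_right_mono mult_right_mono powr_mono2) auto
  finally have nI: "norm I \<le> Kf * (T powr (1 - \<alpha>) * u powr (- \<alpha>) / (1 - 2 * \<alpha>))" .
  have "norm ((1 / (u - 0) powr \<alpha>) *\<^sub>R f u + \<alpha> *\<^sub>R I) \<le> u powr (- \<alpha>) * norm (f u) + \<alpha> * norm I"
    using norm_triangle_ineq[of "(1 / (u - 0) powr \<alpha>) *\<^sub>R f u" "\<alpha> *\<^sub>R I"] u \<alpha>
    by (simp add: powr_minus_divide)
  also have "\<dots> \<le> u powr (- \<alpha>) * Mf + \<alpha> * (Kf * (T powr (1 - \<alpha>) * u powr (- \<alpha>) / (1 - 2 * \<alpha>)))"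
    using mf[of u] nI u \<alpha> by (intro add_mono mult_left_mono) auto
  also have "\<dots> = (Mf + \<alpha> * Kf * T powr (1 - \<alpha>) / (1 - 2 * \<alpha>)) * u powr (- \<alpha>)"
    by (simp add: field_simps)
  finally have *: "norm ((1 / (u - 0) powr \<alpha>) *\<^sub>R f u + \<alpha> *\<^sub>R I)
      \<le> (Mf + \<alpha> * Kf * T powr (1 - \<alpha>) / (1 - 2 * \<alpha>)) * u powr (- \<alpha>)" .
  have G: "Gamma (1 - \<alpha>) > 0" using \<alpha> by (intro Gamma_real_pos) auto
  have "norm (frac_left \<alpha> f 0 u) = norm ((1 / (u - 0) powr \<alpha>) *\<^sub>R f u + \<alpha> *\<^sub>R I) / Gamma (1 - \<alpha>)"
    unfolding frac_left_def I_def using G by simp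
  also have "\<dots> \<le> (Mf + \<alpha> * Kf * T powr (1 - \<alpha>) / (1 - 2 * \<alpha>)) * u powr (- \<alpha>) / Gamma (1 - \<alpha>)"
    using * G by (intro divide_right_mono) auto
  also have "\<dots> = c_left * u powr (- \<alpha>)" unfolding c_left_def by simp
  finally show ?thesis .
qed

lemma abs_frac_right_le:
  assumes u: "0 \<le> u" "u < t" "t \<le> T"
  shows "\<bar>frac_right_nosign \<alpha> \<omega> t u\<bar> \<le> c_right * (t - u) powr (\<nu> + \<alpha> - 1)"
proof -
  have G: "Gamma \<alpha> > 0" using \<alpha> by (intro Gamma_real_pos) auto
  define I where "I = integral {u..t} (\<lambda>v. ((\<omega> u - \<omega> t) - (\<omega> v - \<omega> t)) / (v - u) powr (2 - \<alpha>))"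
  have hi: "((\<lambda>v. Kw * (v - u) powr (\<nu> + \<alpha> - 2)) has_integral Kw * ((t - u) powr (\<nu> + \<alpha> - 1) / (\<nu> + \<alpha> - 1))) {u..t}"
    using has_integral_mult_right[OF has_integral_powr_diff_from[of "\<nu> + \<alpha> - 2" u t]] \<nu> u by simp
  have "norm (((\<omega> u - \<omega> t) - (\<omega> v - \<omega> t)) / (v - u) powr (2 - \<alpha>)) \<le> Kw * (v - u) powr (\<nu> + \<alpha> - 2)"
    if "v \<in> {u..t}" for v
    using abs_right_kernel_le[of u v "2 - \<alpha>"] that u by (simp add: abs_divide diff_diff_eq2)
  then have "norm I \<le> integral {u..t} (\<lambda>v. Kw * (v - u) powr (\<nu> + \<alpha> - 2))"
    unfolding I_def by (rule norm_integral_le_integral_bound) (use hi in \<open>auto simp: has_integral_integrable\<close>)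
  also have "\<dots> = Kw * ((t - u) powr (\<nu> + \<alpha> - 1) / (\<nu> + \<alpha> - 1))"
    using integral_unique[OF hi] by simp
  finally have "(1 - \<alpha>) * \<bar>I\<bar> \<le> (1 - \<alpha>) * (Kw * ((t - u) powr (\<nu> + \<alpha> - 1) / (\<nu> + \<alpha> - 1)))"
    using \<alpha> by (intro mult_left_mono) auto
  moreover have "\<bar>(1 - \<alpha>) * I\<bar> = (1 - \<alpha>) * \<bar>I\<bar>" using \<alpha> by (simp add: abs_mult)
  moreover have "\<bar>(\<omega> u - \<omega> t) / (t - u) powr (1 - \<alpha>)\<bar> \<le> Kw * (t - u) powr (\<nu> + \<alpha> - 1)"
    using abs_right_kernel_le[of u t "1 - \<alpha>"] u by (simp add: abs_divide diff_diff_eq2)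
  ultimately have bound: "\<bar>(\<omega> u - \<omega> t) / (t - u) powr (1 - \<alpha>) + (1 - \<alpha>) * I\<bar>
      \<le> Kw * (t - u) powr (\<nu> + \<alpha> - 1) + (1 - \<alpha>) * (Kw * ((t - u) powr (\<nu> + \<alpha> - 1) / (\<nu> + \<alpha> - 1)))"
    by linarith
  have "\<bar>frac_right_nosign \<alpha> \<omega> t u\<bar> = \<bar>(\<omega> u - \<omega> t) / (t - u) powr (1 - \<alpha>) + (1 - \<alpha>) * I\<bar> / Gamma \<alpha>"
    unfolding frac_right_nosign_def I_def using G by (simp add: abs_mult)
  also have "\<dots> \<le> (Kw * (t - u) powr (\<nu> + \<alpha> - 1) + (1 - \<alpha>) * (Kw * ((t - u) powr (\<nu> + \<alpha> - 1) / (\<nu> + \<alpha> - 1)))) / Gamma \<alpha>"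
    using bound G by (intro divide_right_mono) auto
  also have "\<dots> = c_right * (t - u) powr (\<nu> + \<alpha> - 1)"
    unfolding c_right_def by (simp add: field_simps)
  finally show ?thesis .
qed

text \<open>The fractional derivatives are Henstock-Kurzweil integrals depending on a parameter, so
  the measurability of the Young integrand is not directly accessible. Freezing \<open>f\<close> and \<open>\<omega>\<close>
  outside \<open>[0,T]\<close> makes all kernels jointly Borel, and on \<open>(0,T]\<close> the fractional derivatives then
  agree with Lebesgue integrals of these kernels, which are Borel in the parameter by Fubini.\<close>

definition "f_clamp u = f (clamp 0 T u)"
definition "\<omega>_clamp u = \<omega> (clamp 0 T u)"

lemma f_clamp_borel[measurable]: "f_clamp \<in> borel_measurable lborel"
  using borel_measurable_comp_clamp[OF _ continuous_on_f] T unfolding f_clamp_def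
  by (simp add: measurable_lborel1)

lemma \<omega>_clamp_borel[measurable]: "\<omega>_clamp \<in> borel_measurable lborel"
  using borel_measurable_comp_clamp[OF _ continuous_on_\<omega>] T unfolding \<omega>_clamp_def
  by (simp add: measurable_lborel1)

lemma frac_right_integrand_integrable:
  assumes u: "0 \<le> u" "u < t" "t \<le> T"
  shows "(\<lambda>v. (\<omega> u - \<omega> v) / (v - u) powr (2 - \<alpha>)) integrable_on {u..t}"
proof (rule integrable_on_Icc_if_borel_dominated_inside
    [where g' = "\<lambda>v. (\<omega>_clamp u - \<omega>_clamp v) / (v - u) powr (2 - \<alpha>)" and h = "\<lambda>v. Kw * (v - u) powr (\<nu> + \<alpha> - 2)"])
  show "(\<lambda>v. (\<omega>_clamp u - \<omega>_clamp v) / (v - u) powr (2 - \<alpha>)) \<in> borel_measurable borel"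
  proof -
    have "(\<lambda>v. (\<omega>_clamp u - \<omega>_clamp v) / (v - u) powr (2 - \<alpha>)) \<in> borel_measurable lborel"
      by measurable
    then show ?thesis by (simp add: measurable_lborel1)
  qed
  show "(\<omega> u - \<omega> v) / (v - u) powr (2 - \<alpha>) = (\<omega>_clamp u - \<omega>_clamp v) / (v - u) powr (2 - \<alpha>)"
    if "v \<in> {u<..<t}" for v
    using that u by (simp add: \<omega>_clamp_def clamp_id)
  show "norm ((\<omega> u - \<omega> v) / (v - u) powr (2 - \<alpha>)) \<le> Kw * (v - u) powr (\<nu> + \<alpha> - 2)"
    if "v \<in> {u<..<t}" for v
    using abs_right_kernel_le[of u v "2 - \<alpha>"] that u by (simp add: abs_divide diff_diff_eq2)
  have "(\<lambda>v. Kw * (v - u) powr (\<nu> + \<alpha> - 2)) integrable_on {u..t}"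
    using has_integral_mult_right[OF has_integral_powr_diff_from[of "\<nu> + \<alpha> - 2" u t], of Kw] \<nu> u
    by (auto simp: has_integral_integrable)
  then show "(\<lambda>v. Kw * (v - u) powr (\<nu> + \<alpha> - 2)) integrable_on {u<..<t}"
    by (simp add: integrable_on_open_interval_real)
qed

definition "left_kernel u v = (1 / (u - v) powr (1 + \<alpha>)) *\<^sub>R (f_clamp u - f_clamp v)"
definition "left_kernel_integral u = (LINT v|lborel. indicator {0..u} v *\<^sub>R left_kernel u v)"
definition "frac_left_lebesgue u = (1 / Gamma (1 - \<alpha>)) *\<^sub>R ((1 / (u - 0) powr \<alpha>) *\<^sub>R f_clamp u + \<alpha> *\<^sub>R left_kernel_integral u)"
definition "right_kernel t u v = ((\<omega>_clamp u - \<omega>_clamp t) - (\<omega>_clamp v - \<omega>_clamp t)) / (v - u) powr (2 - \<alpha>)"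
definition "right_kernel_integral t u = (LINT v|lborel. indicator {u..t} v *\<^sub>R right_kernel t u v)"
definition "frac_right_lebesgue t u = (1 / Gamma \<alpha>) * ((\<omega>_clamp u - \<omega>_clamp t) / (t - u) powr (1 - \<alpha>) + (1 - \<alpha>) * right_kernel_integral t u)"

lemma left_kernel_integral_borel: "left_kernel_integral \<in> borel_measurable borel"
proof -
  have "(\<lambda>(u, v). indicator {0..u} v *\<^sub>R left_kernel u v) \<in> borel_measurable (lborel \<Otimes>\<^sub>M lborel)"
    unfolding left_kernel_def indicator_def atLeastAtMost_iff by measurable
  from borel_measurable_lborel_parametric_integral[OF this] show ?thesis unfolding left_kernel_integral_def by simp
qed

lemma right_kernel_integral_borel: "right_kernel_integral t \<in> borel_measurable borel"
proof -
  have "(\<lambda>(u, v). indicator {u..t} v *\<^sub>R right_kernel t u v) \<in> borel_measurable (lborel \<Otimes>\<^sub>M lborel)"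
    unfolding right_kernel_def indicator_def atLeastAtMost_iff by measurable
  from borel_measurable_lborel_parametric_integral[OF this] show ?thesis unfolding right_kernel_integral_def by simp
qed

lemma borel_measurable_frac_product: "(\<lambda>u. frac_right_lebesgue t u *\<^sub>R frac_left_lebesgue u) \<in> borel_measurable borel"
proof -
  have [measurable]: "left_kernel_integral \<in> borel_measurable lborel" "right_kernel_integral t \<in> borel_measurable lborel"
    using left_kernel_integral_borel right_kernel_integral_borel by (simp_all add: measurable_lborel1)
  have "(\<lambda>u. frac_right_lebesgue t u *\<^sub>R frac_left_lebesgue u) \<in> borel_measurable lborel"
    unfolding frac_right_lebesgue_def frac_left_lebesgue_def by measurable
  then show ?thesis by (simp add: measurable_lborel1)
qed

lemma frac_left_eq_lebesgue:
  assumes u: "0 < u" "u \<le> T"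
  shows "frac_left \<alpha> f 0 u = frac_left_lebesgue u"
proof -
  have left_kernel_borel: "(\<lambda>v. left_kernel u v) \<in> borel_measurable borel"
  proof -
    have "(\<lambda>v. left_kernel u v) \<in> borel_measurable lborel" unfolding left_kernel_def by measurable
    then show ?thesis by (simp add: measurable_lborel1)
  qed
  have left_kernel_eq: "left_kernel u v = (1 / (u - v) powr (1 + \<alpha>)) *\<^sub>R (f u - f v)" if "v \<in> {0..u}" for v
    unfolding left_kernel_def f_clamp_def using that u by (simp add: clamp_id)
  have hi: "(\<lambda>v. Kf * (u - v) powr (- 2 * \<alpha>)) integrable_on {0..u}"
    using has_integral_mult_right[OF has_integral_powr_diff_to[of "- 2 * \<alpha>" 0 u], of Kf] \<alpha> u by (auto simp: has_integral_integrable)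
  have abs_int: "(\<lambda>v. left_kernel u v) absolutely_integrable_on {0..u}"
    by (rule absolutely_integrable_if_borel_dominated[OF left_kernel_borel _ _ hi]) (use left_kernel_eq norm_left_kernel_le u in auto)
  have "integral {0..u} (\<lambda>v. (1 / (u - v) powr (1 + \<alpha>)) *\<^sub>R (f u - f v)) = integral {0..u} (\<lambda>v. left_kernel u v)"
    by (rule integral_cong) (use left_kernel_eq in auto)
  also have "\<dots> = left_kernel_integral u" unfolding left_kernel_integral_def by (rule integral_eq_lborel_indicator[OF left_kernel_borel abs_int])
  finally show ?thesis unfolding frac_left_def frac_left_lebesgue_def f_clamp_def using u by (simp add: clamp_id)
qed

lemma frac_right_eq_lebesgue:
  assumes u: "0 \<le> u" "u < t" "t \<le> T"
  shows "frac_right_nosign \<alpha> \<omega> t u = frac_right_lebesgue t u"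
proof -
  have right_kernel_borel: "(\<lambda>v. right_kernel t u v) \<in> borel_measurable borel"
  proof -
    have "(\<lambda>v. right_kernel t u v) \<in> borel_measurable lborel" unfolding right_kernel_def by measurable
    then show ?thesis by (simp add: measurable_lborel1)
  qed
  have right_kernel_eq: "right_kernel t u v = ((\<omega> u - \<omega> t) - (\<omega> v - \<omega> t)) / (v - u) powr (2 - \<alpha>)" if "v \<in> {u..t}" for v
    unfolding right_kernel_def \<omega>_clamp_def using that u by (simp add: clamp_id)
  have hi: "(\<lambda>v. Kw * (v - u) powr (\<nu> + \<alpha> - 2)) integrable_on {u..t}"
    using has_integral_mult_right[OF has_integral_powr_diff_from[of "\<nu> + \<alpha> - 2" u t], of Kw] \<nu> u by (auto simp: has_integral_integrable)
  have abs_int: "(\<lambda>v. right_kernel t u v) absolutely_integrable_on {u..t}"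
  proof (rule absolutely_integrable_if_borel_dominated[OF right_kernel_borel _ _ hi])
    fix v assume v: "v \<in> {u..t}"
    show "norm (right_kernel t u v) \<le> Kw * (v - u) powr (\<nu> + \<alpha> - 2)"
      using abs_right_kernel_le[of u v "2 - \<alpha>"] right_kernel_eq[OF v] v u by (simp add: abs_divide diff_diff_eq2)
  qed simp
  have "integral {u..t} (\<lambda>v. ((\<omega> u - \<omega> t) - (\<omega> v - \<omega> t)) / (v - u) powr (2 - \<alpha>)) = integral {u..t} (\<lambda>v. right_kernel t u v)"
    by (rule integral_cong) (use right_kernel_eq in auto)
  also have "\<dots> = right_kernel_integral t u" unfolding right_kernel_integral_def by (rule integral_eq_lborel_indicator[OF right_kernel_borel abs_int])
  finally show ?thesis unfolding frac_right_nosign_def frac_right_lebesgue_def \<omega>_clamp_def using u by (simp add: clamp_id)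
qed

definition "young_integrand t u = frac_right_nosign \<alpha> \<omega> t u *\<^sub>R frac_left \<alpha> f 0 u"

lemma young_integrand_integrable:
  assumes t: "0 < t" "t \<le> T"
  shows "young_integrand t integrable_on {0..t}"
  unfolding young_integrand_def
proof (rule integrable_on_Icc_if_borel_dominated_inside[OF borel_measurable_frac_product[of t]])
  fix u assume u: "u \<in> {0<..<t}"
  show "frac_right_nosign \<alpha> \<omega> t u *\<^sub>R frac_left \<alpha> f 0 u = frac_right_lebesgue t u *\<^sub>R frac_left_lebesgue u"
    using frac_left_eq_lebesgue[of u] frac_right_eq_lebesgue[of u t] u t by auto
  have "norm (frac_right_nosign \<alpha> \<omega> t u *\<^sub>R frac_left \<alpha> f 0 u) = \<bar>frac_right_nosign \<alpha> \<omega> t u\<bar> * norm (frac_left \<alpha> f 0 u)"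
    by simp
  also have "\<dots> \<le> (c_right * (t - u) powr (\<nu> + \<alpha> - 1)) * (c_left * u powr (- \<alpha>))"
    using abs_frac_right_le[of u t] norm_frac_left_le[of u] u t by (intro mult_mono) auto
  also have "\<dots> \<le> (c_right * T powr (\<nu> + \<alpha> - 1)) * (c_left * u powr (- \<alpha>))"
    using u t \<nu> c_left_nonneg c_right_nonneg by (intro mult_right_mono mult_left_mono powr_mono2) auto
  finally show "norm (frac_right_nosign \<alpha> \<omega> t u *\<^sub>R frac_left \<alpha> f 0 u) \<le> (c_right * T powr (\<nu> + \<alpha> - 1) * c_left) * u powr (- \<alpha>)"
    by (simp add: mult.assoc)
next
  have "(\<lambda>u. (c_right * T powr (\<nu> + \<alpha> - 1) * c_left) * u powr (- \<alpha>)) integrable_on {0..t}"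
    using has_integral_mult_right[OF has_integral_powr_from_0[of "- \<alpha>" t], of "c_right * T powr (\<nu> + \<alpha> - 1) * c_left"] \<alpha> t
    by (auto simp: has_integral_integrable)
  then show "(\<lambda>u. (c_right * T powr (\<nu> + \<alpha> - 1) * c_left) * u powr (- \<alpha>)) integrable_on {0<..<t}"
    by (simp add: integrable_on_open_interval_real)
qed

text \<open>Splitting the kernel integral of the larger endpoint at \<open>s\<close>, the terms containing
  \<open>\<omega>(u)\<close> cancel, because \<open>(1-\<alpha>) \<integral>\<^sub>s\<^sup>t (v-u)\<^sup>\<alpha>\<^sup>-\<^sup>2 dv = (s-u)\<^sup>\<alpha>\<^sup>-\<^sup>1 - (t-u)\<^sup>\<alpha>\<^sup>-\<^sup>1\<close>.\<close>

lemma frac_right_nosign_diff_eq: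
  assumes u: "0 \<le> u" "u < s" "s < t" "t \<le> T"
  shows "frac_right_nosign \<alpha> \<omega> t u - frac_right_nosign \<alpha> \<omega> s u
    = ((\<omega> s - \<omega> t) * (t - u) powr (\<alpha> - 1)
       + (1 - \<alpha>) * integral {s..t} (\<lambda>v. (\<omega> s - \<omega> v) * (v - u) powr (\<alpha> - 2))) / Gamma \<alpha>"
proof -
  define Q where "Q = (\<lambda>v. (\<omega> u - \<omega> v) / (v - u) powr (2 - \<alpha>))"
  define Pt where "Pt = (t - u) powr (\<alpha> - 1)"
  define Ps where "Ps = (s - u) powr (\<alpha> - 1)"
  define E where "E = (Ps - Pt) / (1 - \<alpha>)"
  define R where "R = integral {s..t} (\<lambda>v. (\<omega> s - \<omega> v) * (v - u) powr (\<alpha> - 2))"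
  have eqQ: "(\<lambda>v. ((\<omega> u - \<omega> r) - (\<omega> v - \<omega> r)) / (v - u) powr (2 - \<alpha>)) = Q" for r
    unfolding Q_def by (simp add: algebra_simps)
  have split: "integral {u..t} Q = integral {u..s} Q + integral {s..t} Q"
    using frac_right_integrand_integrable[of u t] u unfolding Q_def
    by (intro Henstock_Kurzweil_Integration.integral_combine[symmetric]) auto
  have "(Pt - Ps) / (\<alpha> - 1) = E" unfolding E_def using \<alpha> by (simp add: field_simps)
  then have hE: "((\<lambda>v. (v - u) powr (\<alpha> - 2)) has_integral E) {s..t}"
    using has_integral_powr_diff_away[of u s t "\<alpha> - 2"] u \<alpha> unfolding Pt_def Ps_def by simp
  have P2I: "(\<lambda>v. (\<omega> s - \<omega> v) * (v - u) powr (\<alpha> - 2)) integrable_on {s..t}"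
    using u by (intro integrable_continuous_real continuous_intros continuous_on_subset[OF continuous_on_\<omega>]) auto
  have "integral {s..t} Q = integral {s..t} (\<lambda>v. (\<omega> u - \<omega> s) * (v - u) powr (\<alpha> - 2) + (\<omega> s - \<omega> v) * (v - u) powr (\<alpha> - 2))"
  proof (rule integral_cong)
    fix v assume "v \<in> {s..t}"
    have "Q v = ((\<omega> u - \<omega> s) + (\<omega> s - \<omega> v)) * (1 / (v - u) powr (2 - \<alpha>))"
      unfolding Q_def by simp
    also have "1 / (v - u) powr (2 - \<alpha>) = (v - u) powr (\<alpha> - 2)"
      using powr_minus_divide[of "v - u" "2 - \<alpha>"] by simp
    finally show "Q v = (\<omega> u - \<omega> s) * (v - u) powr (\<alpha> - 2) + (\<omega> s - \<omega> v) * (v - u) powr (\<alpha> - 2)"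
      by (simp only: distrib_right)
  qed
  also have "\<dots> = (\<omega> u - \<omega> s) * E + R"
    unfolding R_def using integral_unique[OF has_integral_mult_right[OF hE, of "\<omega> u - \<omega> s"]] P2I
      has_integral_integrable[OF has_integral_mult_right[OF hE, of "\<omega> u - \<omega> s"]]
    by (subst integral_add) auto
  finally have Qst: "integral {s..t} Q = (\<omega> u - \<omega> s) * E + R" .
  have Bt: "frac_right_nosign \<alpha> \<omega> t u = ((\<omega> u - \<omega> t) * Pt + (1 - \<alpha>) * (integral {u..s} Q + (\<omega> u - \<omega> s) * E + R)) / Gamma \<alpha>"
    unfolding frac_right_nosign_def eqQ split Qst Pt_def using powr_minus_divide[of "t - u" "1 - \<alpha>"]
    by (simp add: divide_inverse)
  have Bs: "frac_right_nosign \<alpha> \<omega> s u = ((\<omega> u - \<omega> s) * Ps + (1 - \<alpha>) * integral {u..s} Q) / Gamma \<alpha>"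
    unfolding frac_right_nosign_def eqQ Ps_def using powr_minus_divide[of "s - u" "1 - \<alpha>"]
    by (simp add: divide_inverse)
  have E1: "(1 - \<alpha>) * E = Ps - Pt" unfolding E_def using \<alpha> by simp
  have "((\<omega> u - \<omega> t) * Pt + (1 - \<alpha>) * (integral {u..s} Q + (\<omega> u - \<omega> s) * E + R))
      - ((\<omega> u - \<omega> s) * Ps + (1 - \<alpha>) * integral {u..s} Q)
      = (\<omega> u - \<omega> t) * Pt + (\<omega> u - \<omega> s) * ((1 - \<alpha>) * E) + (1 - \<alpha>) * R - (\<omega> u - \<omega> s) * Ps"
    by (simp add: algebra_simps)
  also have "\<dots> = (\<omega> s - \<omega> t) * Pt + (1 - \<alpha>) * R"
    unfolding E1 by (simp add: algebra_simps)
  finally show ?thesis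
    unfolding Bt Bs diff_divide_distrib[symmetric] R_def Pt_def by simp
qed

lemma abs_frac_right_diff_le:
  assumes u: "0 \<le> u" "u < s" "s < t" "t \<le> T"
  shows "\<bar>frac_right_nosign \<alpha> \<omega> t u - frac_right_nosign \<alpha> \<omega> s u\<bar>
    \<le> Kw / Gamma \<alpha> * (t - s) powr \<nu> * (s - u) powr (\<alpha> - 1)"
proof -
  define Pt where "Pt = (t - u) powr (\<alpha> - 1)"
  define Ps where "Ps = (s - u) powr (\<alpha> - 1)"
  define D where "D = (t - s) powr \<nu>"
  define R where "R = integral {s..t} (\<lambda>v. (\<omega> s - \<omega> v) * (v - u) powr (\<alpha> - 2))"
  have "(Pt - Ps) / (\<alpha> - 1) = (Ps - Pt) / (1 - \<alpha>)" using \<alpha> by (simp add: field_simps)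
  then have hE: "((\<lambda>v. Kw * D * (v - u) powr (\<alpha> - 2)) has_integral Kw * D * ((Ps - Pt) / (1 - \<alpha>))) {s..t}"
    using has_integral_powr_diff_away[of u s t "\<alpha> - 2"] u \<alpha> unfolding Pt_def Ps_def
    by (intro has_integral_mult_right) simp
  have "norm R \<le> integral {s..t} (\<lambda>v. Kw * D * (v - u) powr (\<alpha> - 2))"
    unfolding R_def
  proof (rule norm_integral_le_integral_bound)
    fix v assume v: "v \<in> {s..t}"
    have "\<bar>\<omega> s - \<omega> v\<bar> \<le> Kw * \<bar>v - s\<bar> powr \<nu>" using hw[of s v] v u by (simp add: abs_minus_commute)
    also have "\<dots> \<le> Kw * D" unfolding D_def using v Kw \<alpha> \<nu> by (intro mult_left_mono powr_mono2) auto
    finally show "norm ((\<omega> s - \<omega> v) * (v - u) powr (\<alpha> - 2)) \<le> Kw * D * (v - u) powr (\<alpha> - 2)"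
      by (simp add: abs_mult mult_right_mono)
  qed (use hE in \<open>simp add: has_integral_integrable\<close>)
  then have "\<bar>R\<bar> \<le> Kw * D * ((Ps - Pt) / (1 - \<alpha>))"
    using integral_unique[OF hE] by simp
  then have "(1 - \<alpha>) * \<bar>R\<bar> \<le> (1 - \<alpha>) * (Kw * D * ((Ps - Pt) / (1 - \<alpha>)))"
    using \<alpha> by (intro mult_left_mono) auto
  also have "\<dots> = Kw * D * (Ps - Pt)" using \<alpha> by simp
  finally have "\<bar>(1 - \<alpha>) * R\<bar> \<le> Kw * D * (Ps - Pt)"
    using \<alpha> by (simp add: abs_mult)
  moreover have "\<bar>(\<omega> s - \<omega> t) * Pt\<bar> \<le> Kw * D * Pt"
  proof -
    have "\<bar>\<omega> s - \<omega> t\<bar> \<le> Kw * D" using hw[of t s] u unfolding D_def by (simp add: abs_minus_commute)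
    then show ?thesis unfolding Pt_def by (simp add: abs_mult mult_right_mono)
  qed
  ultimately have "\<bar>(\<omega> s - \<omega> t) * Pt + (1 - \<alpha>) * R\<bar> \<le> Kw * D * Ps"
    by (smt (verit, best) distrib_left)
  moreover have "Gamma \<alpha> > 0" using \<alpha> by (intro Gamma_real_pos) auto
  ultimately have "\<bar>((\<omega> s - \<omega> t) * Pt + (1 - \<alpha>) * R) / Gamma \<alpha>\<bar> \<le> Kw * D * Ps / Gamma \<alpha>"
    by (simp add: abs_divide divide_right_mono)
  then show ?thesis
    unfolding frac_right_nosign_diff_eq[OF u] R_def[symmetric] Pt_def[symmetric] D_def Ps_def
    by (simp add: field_simps)
qed

lemma norm_young_tail_le:
  assumes st: "0 \<le> s" "s < t" "t \<le> T"
  shows "norm (integral {s..t} (young_integrand t)) \<le> c_left * c_right / (1 - \<alpha>) * (t - s) powr \<nu>"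
proof -
  define c where "c = c_left * c_right * (t - s) powr (\<nu> + \<alpha> - 1)"
  have hc: "((\<lambda>u. c * (u - s) powr (- \<alpha>)) has_integral c * ((t - s) powr (- \<alpha> + 1) / (- \<alpha> + 1))) {s..t}"
    using has_integral_mult_right[OF has_integral_powr_diff_from[of "- \<alpha>" s t], of c] \<alpha> st by simp
  have "norm (integral {s..t} (young_integrand t)) = norm (integral {s<..<t} (young_integrand t))"
    by (simp add: integral_open_interval_real)
  also have "\<dots> \<le> integral {s<..<t} (\<lambda>u. c * (u - s) powr (- \<alpha>))"
  proof (rule norm_integral_le_integral_bound)
    fix u assume u: "u \<in> {s<..<t}"
    have "norm (young_integrand t u) = \<bar>frac_right_nosign \<alpha> \<omega> t u\<bar> * norm (frac_left \<alpha> f 0 u)"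
      unfolding young_integrand_def by simp
    also have "\<dots> \<le> (c_right * (t - u) powr (\<nu> + \<alpha> - 1)) * (c_left * u powr (- \<alpha>))"
      using abs_frac_right_le[of u t] norm_frac_left_le[of u] u st by (intro mult_mono) auto
    also have "\<dots> \<le> (c_right * (t - s) powr (\<nu> + \<alpha> - 1)) * (c_left * (u - s) powr (- \<alpha>))"
      using u st \<nu> \<alpha> c_left_nonneg c_right_nonneg
      by (intro mult_mono mult_left_mono powr_mono2 powr_mono2') auto
    also have "\<dots> = c * (u - s) powr (- \<alpha>)" unfolding c_def by simp
    finally show "norm (young_integrand t u) \<le> c * (u - s) powr (- \<alpha>)" .
  next
    show "(\<lambda>u. c * (u - s) powr (- \<alpha>)) integrable_on {s<..<t}"
      using hc by (simp add: integrable_on_open_interval_real has_integral_integrable)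
  qed
  also have "\<dots> = c * ((t - s) powr (1 - \<alpha>) / (1 - \<alpha>))"
    using integral_unique[OF hc] by (simp add: integral_open_interval_real[symmetric])
  also have "\<dots> = c_left * c_right / (1 - \<alpha>) * ((t - s) powr (\<nu> + \<alpha> - 1) * (t - s) powr (1 - \<alpha>))"
    unfolding c_def by simp
  also have "(t - s) powr (\<nu> + \<alpha> - 1) * (t - s) powr (1 - \<alpha>) = (t - s) powr \<nu>"
    by (simp add: powr_add[symmetric])
  finally show ?thesis .
qed

lemma norm_young_head_le:
  assumes st: "0 < s" "s < t" "t \<le> T"
  shows "norm (integral {0..s} (\<lambda>u. young_integrand t u - young_integrand s u)) \<le> c_left * Kw / Gamma \<alpha> * Beta (1 - \<alpha>) \<alpha> * (t - s) powr \<nu>"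
proof -
  define c where "c = c_left * Kw / Gamma \<alpha> * (t - s) powr \<nu>"
  have hc: "((\<lambda>u. c * (u powr (- \<alpha>) * (s - u) powr (\<alpha> - 1))) has_integral c * Beta (1 - \<alpha>) \<alpha>) {0..s}"
    using has_integral_mult_right[OF has_integral_Beta_on_interval[of "1 - \<alpha>" \<alpha> s], of c] \<alpha> st by simp
  have G: "Gamma \<alpha> > 0" using \<alpha> by (intro Gamma_real_pos) auto
  have "norm (integral {0..s} (\<lambda>u. young_integrand t u - young_integrand s u)) = norm (integral {0<..<s} (\<lambda>u. young_integrand t u - young_integrand s u))"
    by (simp add: integral_open_interval_real)
  also have "\<dots> \<le> integral {0<..<s} (\<lambda>u. c * (u powr (- \<alpha>) * (s - u) powr (\<alpha> - 1)))"
  proof (rule norm_integral_le_integral_bound)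
    fix u assume u: "u \<in> {0<..<s}"
    have "young_integrand t u - young_integrand s u = (frac_right_nosign \<alpha> \<omega> t u - frac_right_nosign \<alpha> \<omega> s u) *\<^sub>R frac_left \<alpha> f 0 u"
      unfolding young_integrand_def by (simp add: scaleR_diff_left)
    then have "norm (young_integrand t u - young_integrand s u) = \<bar>frac_right_nosign \<alpha> \<omega> t u - frac_right_nosign \<alpha> \<omega> s u\<bar> * norm (frac_left \<alpha> f 0 u)"
      by simp
    also have "\<dots> \<le> (Kw / Gamma \<alpha> * (t - s) powr \<nu> * (s - u) powr (\<alpha> - 1)) * (c_left * u powr (- \<alpha>))"
      using abs_frac_right_diff_le[of u s t] norm_frac_left_le[of u] u st by (intro mult_mono) auto
    also have "\<dots> = c * (u powr (- \<alpha>) * (s - u) powr (\<alpha> - 1))" unfolding c_def by simp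
    finally show "norm (young_integrand t u - young_integrand s u) \<le> c * (u powr (- \<alpha>) * (s - u) powr (\<alpha> - 1))" .
  next
    show "(\<lambda>u. c * (u powr (- \<alpha>) * (s - u) powr (\<alpha> - 1))) integrable_on {0<..<s}"
      using hc by (simp add: integrable_on_open_interval_real has_integral_integrable)
  qed
  also have "\<dots> = c * Beta (1 - \<alpha>) \<alpha>"
    using integral_unique[OF hc] by (simp add: integral_open_interval_real[symmetric])
  finally show ?thesis unfolding c_def by (simp add: mult_ac)
qed

lemma young_integral_eq: "young_integral \<alpha> f \<omega> 0 t = - integral {0..t} (young_integrand t)"
  unfolding young_integral_def young_integrand_def by simp

lemma hoelder0_young: "hoelder0 (1 - \<alpha>) 0 T (\<lambda>t. young_integral \<alpha> f \<omega> 0 t)"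
proof -
  define C where "C = c_left * c_right / (1 - \<alpha>) + c_left * Kw / Gamma \<alpha> * Beta (1 - \<alpha>) \<alpha>"
  have "Gamma \<alpha> > 0" "Beta (1 - \<alpha>) \<alpha> \<ge> 0"
    using \<alpha> by (auto simp: Beta_def Gamma_real_pos less_imp_le)
  then have C2: "c_left * Kw / Gamma \<alpha> * Beta (1 - \<alpha>) \<alpha> \<ge> 0" using c_left_nonneg Kw by simp
  have C0: "C \<ge> 0" unfolding C_def using C2 c_left_nonneg c_right_nonneg \<alpha> by simp
  have inc: "norm (young_integral \<alpha> f \<omega> 0 t - young_integral \<alpha> f \<omega> 0 s) \<le> C * (t - s) powr \<nu>"
    if st: "0 \<le> s" "s < t" "t \<le> T" for s t
  proof (cases "s = 0")
    case True
    then have "norm (young_integral \<alpha> f \<omega> 0 t - young_integral \<alpha> f \<omega> 0 s) = norm (integral {s..t} (young_integrand t))"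
      unfolding young_integral_eq by simp
    also have "\<dots> \<le> c_left * c_right / (1 - \<alpha>) * (t - s) powr \<nu>" by (rule norm_young_tail_le[OF st])
    also have "\<dots> \<le> C * (t - s) powr \<nu>" unfolding C_def using C2 by (intro mult_right_mono) auto
    finally show ?thesis .
  next
    case False
    then have s: "0 < s" using st by simp
    have git: "young_integrand t integrable_on {0..t}" and gis: "young_integrand s integrable_on {0..s}"
      using st s by (auto intro!: young_integrand_integrable)
    have "integral {0..t} (young_integrand t) = integral {0..s} (young_integrand t) + integral {s..t} (young_integrand t)"
      by (rule Henstock_Kurzweil_Integration.integral_combine[symmetric]) (use st git in auto)
    moreover have "integral {0..s} (\<lambda>u. young_integrand t u - young_integrand s u)
        = integral {0..s} (young_integrand t) - integral {0..s} (young_integrand s)"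
      by (rule integral_diff[OF integrable_subinterval_real[OF git] gis]) (use st in auto)
    ultimately have "young_integral \<alpha> f \<omega> 0 t - young_integral \<alpha> f \<omega> 0 s
        = - (integral {0..s} (\<lambda>u. young_integrand t u - young_integrand s u) + integral {s..t} (young_integrand t))"
      unfolding young_integral_eq by (simp add: algebra_simps)
    then have "norm (young_integral \<alpha> f \<omega> 0 t - young_integral \<alpha> f \<omega> 0 s)
        \<le> norm (integral {0..s} (\<lambda>u. young_integrand t u - young_integrand s u)) + norm (integral {s..t} (young_integrand t))"
      by (simp only: norm_minus_cancel norm_triangle_ineq)
    also have "\<dots> \<le> c_left * Kw / Gamma \<alpha> * Beta (1 - \<alpha>) \<alpha> * (t - s) powr \<nu> + c_left * c_right / (1 - \<alpha>) * (t - s) powr \<nu>"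
      using norm_young_head_le[OF s st(2,3)] norm_young_tail_le[OF st] by (rule add_mono)
    also have "\<dots> = C * (t - s) powr \<nu>" unfolding C_def by (simp only: distrib_right add.commute)
    finally show ?thesis .
  qed
  show ?thesis
    using \<alpha> \<nu> by (intro hoelder0_if_higher_order_bound[OF T _ _ C0 inc]) auto
qed

end

lemma hoelder0_young_integral:
  fixes f :: "real \<Rightarrow> 'a::euclidean_space"
  assumes T: "T > 0" and \<alpha>: "0 < \<alpha>" "\<alpha> < 1/2" and \<nu>: "1 - \<alpha> < \<nu>" "\<nu> < 1"
    and f: "\<And>s t. s \<in> {0..T} \<Longrightarrow> t \<in> {0..T} \<Longrightarrow> norm (f t - f s) \<le> K * \<bar>t - s\<bar> powr (1 - \<alpha>)"
    and \<omega>: "hoelder \<nu> 0 T \<omega>"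
  shows "hoelder0 (1 - \<alpha>) 0 T (\<lambda>t. young_integral \<alpha> f \<omega> 0 t)"
proof -
  have f': "norm (f t - f s) \<le> max K 0 * \<bar>t - s\<bar> powr (1 - \<alpha>)" if "s \<in> {0..T}" "t \<in> {0..T}" for s t
    using f[OF that] by (smt (verit) mult_right_mono powr_ge_zero)
  obtain M where M: "\<And>s. s \<in> {0..T} \<Longrightarrow> norm (f s) \<le> M"
    using compact_imp_bounded[OF compact_continuous_image[OF hoelder_bound_imp_continuous_on[OF _ f] compact_Icc]] \<alpha>
    unfolding bounded_iff by force
  obtain Kw where "Kw \<ge> 0" "\<And>s t. s \<in> {0..T} \<Longrightarrow> t \<in> {0..T} \<Longrightarrow> \<bar>\<omega> t - \<omega> s\<bar> \<le> Kw * \<bar>t - s\<bar> powr \<nu>"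
    using hoelder_obtain_bound[OF \<omega>] by (metis real_norm_def)
  then interpret young_setting f \<omega> \<alpha> \<nu> T "max K 0" "max M 0" Kw
    using T \<alpha> \<nu> f' M by unfold_locales (auto intro: max.coboundedI1)
  show ?thesis by (rule hoelder0_young)
qed

theorem proposition1:
  fixes r T H \<nu> \<alpha> :: real
    and F G :: "(real \<Rightarrow> 'a::euclidean_space) \<Rightarrow> 'a"
    and DG :: "(real \<Rightarrow> 'a) \<Rightarrow> (real \<Rightarrow> 'a) \<Rightarrow> 'a"
    and \<omega> :: "real \<Rightarrow> real"
    and x :: "real \<Rightarrow> 'a"
  assumes r: "r > 0" and T: "T > 0"
    and H: "1/2 < H" "H < 1"
    and nu: "1/2 < \<nu>" "\<nu> < H"
    and alpha: "1 - \<nu> < \<alpha>" "\<alpha> < 1/2"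
    and F_hyp: "\<exists>L1>0. \<exists>L2>0. \<forall>\<xi>\<in>Cr r. \<forall>\<eta>\<in>Cr r.
        norm (F \<xi> - F \<eta>) \<le> L1 * supn r (\<lambda>\<theta>. \<xi> \<theta> - \<eta> \<theta>) \<and>
        norm (F \<xi>) \<le> L2 * (1 + supn r \<xi>)"
    and G_C1: "frechet_C1_on_Cr r G DG"
    and G_hyp: "\<exists>L3>0. \<exists>L4>0. \<forall>\<xi>\<in>Cr r. \<forall>\<eta>\<in>Cr r.
        (\<forall>h\<in>Cr r. norm (DG \<xi> h) \<le> L3 * supn r h) \<and>
        (\<forall>h\<in>Cr r. norm (DG \<xi> h - DG \<eta> h) \<le> L4 * supn r (\<lambda>\<theta>. \<xi> \<theta> - \<eta> \<theta>) * supn r h)"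
    and omega: "hoelder \<nu> 0 T \<omega>"
    and x: "hoelder0 (1 - \<alpha>) (-r) T x"
  shows "hoelder0 (1 - \<alpha>) 0 T (\<lambda>t. integral {0..t} (\<lambda>s. F (segment x s)))
       \<and> hoelder0 (1 - \<alpha>) 0 T (\<lambda>t. young_integral \<alpha> (\<lambda>s. G (segment x s)) \<omega> 0 t)"
proof
  have \<alpha>0: "0 < \<alpha>" and \<nu>1: "\<nu> < 1" using alpha nu H by linarith+
  then have \<beta>: "0 < 1 - \<alpha>" "1 - \<alpha> < 1" using alpha by auto
  obtain Kx where Kx: "\<And>s t. s \<in> {-r..T} \<Longrightarrow> t \<in> {-r..T} \<Longrightarrow> norm (x t - x s) \<le> Kx * \<bar>t - s\<bar> powr (1 - \<alpha>)"
    using x hoelder_obtain_bound unfolding hoelder0_def by metis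
  obtain L1 where "L1 > 0" "\<And>\<xi> \<eta>. \<xi> \<in> Cr r \<Longrightarrow> \<eta> \<in> Cr r \<Longrightarrow> norm (F \<xi> - F \<eta>) \<le> L1 * supn r (\<lambda>\<theta>. \<xi> \<theta> - \<eta> \<theta>)"
    using F_hyp by blast
  then have "norm (F (segment x t) - F (segment x s)) \<le> (L1 * Kx) * \<bar>t - s\<bar> powr (1 - \<alpha>)"
    if "s \<in> {0..T}" "t \<in> {0..T}" for s t
    using r \<beta> Kx that by (intro hoelder_bound_lipschitz_comp_segment[where r=r]) auto
  then show "hoelder0 (1 - \<alpha>) 0 T (\<lambda>t. integral {0..t} (\<lambda>s. F (segment x s)))"
    using \<beta> by (intro hoelder0_integral_of_continuous[OF T] hoelder_bound_imp_continuous_on[where \<beta>="1 - \<alpha>"]) auto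
  obtain L3 where "L3 > 0" "\<And>\<xi> h. \<xi> \<in> Cr r \<Longrightarrow> h \<in> Cr r \<Longrightarrow> norm (DG \<xi> h) \<le> L3 * supn r h"
    using G_hyp by blast
  then have "norm (G (segment x t) - G (segment x s)) \<le> (L3 * Kx) * \<bar>t - s\<bar> powr (1 - \<alpha>)"
    if "s \<in> {0..T}" "t \<in> {0..T}" for s t
    using r \<beta> Kx that frechet_C1_on_Cr_lipschitz[OF _ G_C1]
    by (intro hoelder_bound_lipschitz_comp_segment[where r=r]) auto
  then show "hoelder0 (1 - \<alpha>) 0 T (\<lambda>t. young_integral \<alpha> (\<lambda>s. G (segment x s)) \<omega> 0 t)"
    using \<alpha>0 alpha \<nu>1 by (intro hoelder0_young_integral[OF T _ _ _ _ _ omega]) auto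
qed

end
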